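(* Let $R$ be a commutative ring with identity $1\neq 0$. Then $R$ is semi-complemented if and only if $R$ satisfies Property $D$ or $R$ is complemented.
   Context: $\mathfrak{N}(R)$ denotes the nilradical of $R$ and $\mathrm{reg}(R)$ the set of regular elements (non-zero-divisors) of $R$. An element $a\in R$ is complemented if there is $b\in R$ with $ab=0$ and $a+b\in\mathrm{reg}(R)$; $R$ is complemented if every element is complemented. $R$ is semi-complemented if every element of $R\setminus\mathfrak{N}(R)$ is complemented. $R$ satisfies Property $D$ if $R\setminus\mathfrak{N}(R)=\mathrm{reg}(R)$. *)

theory Defs
  imports Main
begin

definition nilradical :: "'a::comm_ring_1 set" where
  "nilradical = {x. \<exists>n::nat. x ^ n = 0}"

definition reg :: "'a::comm_ring_1 set" where
  "reg = {r. \<forall>x. r * x = 0 \<longrightarrow> x = 0}"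

definition complemented_elem :: "'a::comm_ring_1 \<Rightarrow> bool" where
  "complemented_elem a \<longleftrightarrow> (\<exists>b. a * b = 0 \<and> a + b \<in> reg)"

definition complemented_ring :: "'a::comm_ring_1 itself \<Rightarrow> bool" where
  "complemented_ring _ \<longleftrightarrow> (\<forall>a::'a. complemented_elem a)"

definition semi_complemented_ring :: "'a::comm_ring_1 itself \<Rightarrow> bool" where
  "semi_complemented_ring _ \<longleftrightarrow> (\<forall>a::'a. a \<notin> nilradical \<longrightarrow> complemented_elem a)"

definition property_D :: "'a::comm_ring_1 itself \<Rightarrow> bool" where
  "property_D _ \<longleftrightarrow> (UNIV - (nilradical :: 'a set)) = reg"

end

theory Submission
  imports Defs
begin

(* If R is semi-complemented but not of Property D, some non-nilpotent zero-divisor a has a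
   complement b, and b is again non-nilpotent. The key observation is that a square-zero element z
   annihilating one of a, b must vanish: complementing the non-nilpotent a + z (or b + z) forces z
   to be killed by a + b, which is regular. Applied first to z = y b and then to z = y, this kills
   every square-zero y, so R is reduced; there semi-complementedness misses only 0, which is
   complemented by 1. *)

lemma one_in_reg: "(1::'a::comm_ring_1) \<in> reg"
  by (simp add: reg_def)

lemma mult_in_reg:
  assumes "u \<in> reg" and "v \<in> reg"
  shows "(u * v :: 'a::comm_ring_1) \<in> reg"
  unfolding reg_def
proof (intro CollectI allI impI)
  fix x
  assume "u * v * x = 0"
  then have "u * (v * x) = 0"
    by (simp add: mult.assoc)
  then have "v * x = 0"
    using assms(1) unfolding reg_def by blast
  then show "x = 0"
    using assms(2) unfolding reg_def by blast
qed

lemma power_in_reg: "u \<in> reg \<Longrightarrow> (u::'a::comm_ring_1) ^ k \<in> reg"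
  by (induction k) (simp_all add: one_in_reg mult_in_reg)

lemma mult_in_regD:
  assumes "(u * v :: 'a::comm_ring_1) \<in> reg"
  shows "v \<in> reg"
  unfolding reg_def
proof (intro CollectI allI impI)
  fix x
  assume "v * x = 0"
  then have "u * v * x = 0"
    by (simp add: mult.assoc)
  with assms show "x = 0"
    unfolding reg_def by blast
qed

lemma reg_disjoint_nilradical:
  assumes "(1::'a::comm_ring_1) \<noteq> 0"
  shows "reg \<inter> (nilradical :: 'a set) = {}"
proof (intro equalityI subsetI)
  fix r :: 'a
  assume "r \<in> reg \<inter> nilradical"
  then obtain n where "r ^ n \<in> reg" "r ^ n = 0"
    unfolding nilradical_def by (blast intro: power_in_reg)
  then have "r ^ n * 1 = 0 \<longrightarrow> (1::'a) = 0"
    unfolding reg_def by blast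
  with assms \<open>r ^ n = 0\<close> show "r \<in> {}"
    by simp
qed simp

lemma diff_nilradical_in_reg:
  fixes u n :: "'a::comm_ring_1"
  assumes u: "u \<in> reg" and n: "n \<in> nilradical"
  shows "u - n \<in> reg"
proof -
  obtain k where "n ^ k = 0"
    using n unfolding nilradical_def by blast
  then have "(\<Sum>i<k. n ^ (k - Suc i) * u ^ i) * (u - n) = u ^ k"
    using power_diff_sumr2[of u k n] by (simp only: mult.commute[of "u - n"] diff_zero)
  with power_in_reg[OF u] show ?thesis
    using mult_in_regD[of "\<Sum>i<k. n ^ (k - Suc i) * u ^ i" "u - n"] by simp
qed

lemma nilradical_obtains_square_zero:
  fixes x :: "'a::comm_ring_1"
  assumes "x \<in> nilradical" and "x \<noteq> 0"
  obtains y :: 'a where "y \<noteq> 0" and "y * y = 0"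
proof -
  obtain n where "x ^ n = 0"
    using assms(1) unfolding nilradical_def by blast
  then have "x ^ Suc n = 0" by simp
  with assms(2) obtain k where k: "x ^ Suc k \<noteq> 0" "x ^ Suc (Suc k) = 0"
    using ex_least_nat_less[of "\<lambda>i. x ^ Suc i = 0" n] by auto
  have "x ^ Suc k * x ^ Suc k = x ^ Suc (Suc k) * x ^ k"
    by (simp add: power_add[symmetric])
  with k(2) have "x ^ Suc k * x ^ Suc k = 0"
    by simp
  with k(1) show ?thesis
    using that by blast
qed

lemma reg_complemented: "a \<in> reg \<Longrightarrow> complemented_elem a"
  unfolding complemented_elem_def by (intro exI[of _ 0]) simp

lemma zero_complemented: "complemented_elem (0::'a::comm_ring_1)"
  unfolding complemented_elem_def by (intro exI[of _ 1]) (simp add: one_in_reg)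

lemma complemented_imp_semi_complemented:
  "complemented_ring TYPE('a::comm_ring_1) \<Longrightarrow> semi_complemented_ring TYPE('a::comm_ring_1)"
  unfolding complemented_ring_def semi_complemented_ring_def by blast

lemma property_D_imp_semi_complemented:
  "property_D TYPE('a::comm_ring_1) \<Longrightarrow> semi_complemented_ring TYPE('a::comm_ring_1)"
  unfolding property_D_def semi_complemented_ring_def by (blast intro: reg_complemented)

lemma not_property_D_imp_zero_divisor:
  assumes "(1::'a::comm_ring_1) \<noteq> 0" and "\<not> property_D TYPE('a)"
  shows "\<exists>a::'a. a \<notin> nilradical \<and> a \<notin> reg"
  using assms reg_disjoint_nilradical[OF assms(1)]
  unfolding property_D_def by blast

lemma complement_not_nilradical:
  fixes a b :: "'a::comm_ring_1"
  assumes "a + b \<in> reg" and "a \<notin> reg"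
  shows "b \<notin> nilradical"
proof
  assume "b \<in> nilradical"
  with assms(1) have "a + b - b \<in> reg"
    by (rule diff_nilradical_in_reg)
  with assms(2) show False by simp
qed

lemma square_zero_annihilator_eq_0:
  fixes a b z :: "'a::comm_ring_1"
  assumes semi: "semi_complemented_ring TYPE('a)"
    and ab: "a * b = 0" and ab_reg: "a + b \<in> reg" and a: "a \<notin> nilradical"
    and zz: "z * z = 0" and za: "z * a = 0"
  shows "z = 0"
proof -
  have square: "(a + z) ^ 2 = a ^ 2"
    using zz za by (simp add: power2_eq_square algebra_simps)
  have "a + z \<notin> nilradical"
  proof
    assume "a + z \<in> nilradical"
    then obtain n where "(a + z) ^ n = 0"
      unfolding nilradical_def by blast
    have "a ^ (2 * n) = ((a + z) ^ 2) ^ n"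
      by (simp add: square power_mult)
    also have "\<dots> = ((a + z) ^ n) ^ 2"
      by (simp add: power_mult[symmetric] mult.commute)
    finally have "a ^ (2 * n) = 0"
      using \<open>(a + z) ^ n = 0\<close> by simp
    with a show False
      unfolding nilradical_def by blast
  qed
  then obtain c where c: "(a + z) * c = 0" and c_reg: "a + z + c \<in> reg"
    using semi unfolding semi_complemented_ring_def complemented_elem_def by blast
  have "(a + z + c) * (z * b) = (a * b) * z + (z * z) * b + ((a + z) * c) * b - (a * b) * c"
    by (simp add: algebra_simps)
  then have "(a + z + c) * (z * b) = 0"
    using ab zz c by simp
  with c_reg have "z * b = 0"
    unfolding reg_def by blast
  with za have "(a + b) * z = 0"
    by (simp add: distrib_right mult.commute[of a z] mult.commute[of b z])
  with ab_reg show "z = 0"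
    unfolding reg_def by blast
qed

lemma semi_complemented_zero_divisor_imp_reduced:
  fixes a :: "'a::comm_ring_1"
  assumes semi: "semi_complemented_ring TYPE('a)"
    and a: "a \<notin> nilradical" and a_zd: "a \<notin> reg"
  shows "nilradical = {0::'a}"
proof -
  obtain b where ab: "a * b = 0" and ab_reg: "a + b \<in> reg"
    using semi a unfolding semi_complemented_ring_def complemented_elem_def by blast
  have b: "b \<notin> nilradical"
    using complement_not_nilradical[OF ab_reg a_zd] .
  have ba: "b * a = 0" and ba_reg: "b + a \<in> reg"
    using ab ab_reg by (simp_all add: ac_simps)
  have square_zero: "y = 0" if yy: "y * y = 0" for y :: 'a
  proof -
    have "y * b * (y * b) = (y * y) * (b * b)" and "y * b * a = y * (a * b)"
      by (simp_all add: ac_simps)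
    with yy ab have "y * b * (y * b) = 0" and "y * b * a = 0"
      by simp_all
    then have "y * b = 0"
      using square_zero_annihilator_eq_0[OF semi ab ab_reg a] by blast
    then show "y = 0"
      using square_zero_annihilator_eq_0[OF semi ba ba_reg b yy] by (simp add: mult.commute)
  qed
  have "x = 0" if "x \<in> nilradical" for x :: 'a
    using nilradical_obtains_square_zero[OF that] square_zero by blast
  moreover have "(0::'a) \<in> nilradical"
    unfolding nilradical_def by (intro CollectI exI[of _ 1]) simp
  ultimately show ?thesis by blast
qed

lemma reduced_semi_complemented_imp_complemented:
  assumes "semi_complemented_ring TYPE('a::comm_ring_1)" and "nilradical = {0::'a}"
  shows "complemented_ring TYPE('a)"
  unfolding complemented_ring_def
proof
  fix x :: 'a
  show "complemented_elem x"
    using assms zero_complemented unfolding semi_complemented_ring_def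
    by (cases "x = 0") auto
qed

theorem mainTheorem1:
  assumes "(1::'a::comm_ring_1) \<noteq> 0"
  shows "semi_complemented_ring TYPE('a) \<longleftrightarrow>
         (property_D TYPE('a) \<or> complemented_ring TYPE('a))"
proof
  assume semi: "semi_complemented_ring TYPE('a)"
  show "property_D TYPE('a) \<or> complemented_ring TYPE('a)"
  proof (cases "property_D TYPE('a)")
    case False
    then obtain a :: 'a where "a \<notin> nilradical" and "a \<notin> reg"
      using not_property_D_imp_zero_divisor[OF assms False] by blast
    then have "nilradical = {0::'a}"
      using semi_complemented_zero_divisor_imp_reduced[OF semi] by blast
    then show ?thesis
      using reduced_semi_complemented_imp_complemented[OF semi] by blast
  qed simp
next
  assume "property_D TYPE('a) \<or> complemented_ring TYPE('a)"
  then show "semi_complemented_ring TYPE('a)"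
    using property_D_imp_semi_complemented complemented_imp_semi_complemented by blast
qed

end
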